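(* Under the standing assumptions below, let $t_0=\langle C_\Theta/4a^3\lambda\rangle$. There exist $\alpha,\beta>0$ such that for every unit vector $w\in\mathbb{C}^N$ and every $Q\in\bigcup_{t\in(0,t_0]}\Delta_t$ there is a collection $\{Q_k\}_k\subseteq\Delta_{(0,1]}$ of pairwise disjoint subsets of $Q$ such that $E_Q:=Q\setminus\bigcup_kQ_k$ satisfies $\mu(E_Q)>\beta\mu(Q)$, and $E_Q^*:=C(Q)\setminus\bigcup_kC(Q_k)$ has the property that $\mathrm{Re}\left(w,\frac{1}{\mu(Q')}\int_{Q'}f^w_Q\,d\mu\right)\ge\alpha$ and $\frac{1}{\mu(Q')}\int_{Q'}|f^w_Q|\,d\mu\le\frac{1}{\alpha}$ for all $Q'\in\Delta_{(0,1]}$ with $Q'\subseteq Q$ and $C(Q')\cap E_Q^*\neq\emptyset$.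
   Context: $M$ is a smooth connected complete Riemannian manifold with geodesic distance $\rho$, Riemannian measure $\mu$, satisfying $(\mathrm{E}_{\mathrm{loc}})$ (constants $c\ge1$, $\kappa,\lambda\ge0$: $0<V(x,\alpha r)\le c\alpha^\kappa e^{\lambda\alpha r}V(x,r)<\infty$ for $\alpha\ge1$) and $(\mathrm{P}_{\mathrm{loc}})$ (local $L^2$ Poincaré inequality on balls of radius $\le1$). Operators $\Gamma,B_1,B_2$ on $L^2(M;\mathbb{C}^N)$ satisfy (H1)–(H8): (H1) $\Gamma$ densely defined, closed, nilpotent; (H2) $B_1,B_2$ bounded with $\mathrm{Re}\langle B_1u,u\rangle\ge\kappa_1\|u\|^2$ on $\mathsf{R}(\Gamma^* )$ and $\mathrm{Re}\langle B_2u,u\rangle\ge\kappa_2\|u\|^2$ on $\mathsf{R}(\Gamma)$; (H3) $\Gamma^*B_2B_1\Gamma^*=0$ on $\mathsf{D}(\Gamma^* )$, $\Gamma B_1B_2\Gamma=0$ on $\mathsf{D}(\Gamma)$; (H4) Hilbert space $L^2(M;\mathbb{C}^N)$; (H5) $B_i$ multiplication by $L^\infty(M;\mathcal{L}(\mathbb{C}^N))$ functions; (H6) for $\eta\in C_c^\infty(M)$, $\mathsf{D}(\Gamma)\subseteq\mathsf{D}(\Gamma\eta I)$ and $|[\Gamma,\eta I]u(x)|\le C_\Gamma|\nabla\eta(x)||u(x)|$; (H7) $|\int_B\Gamma u|\le c\mu(B)^{1/2}\|u\|$ and $|\int_B\Gamma^*v|\le c\mu(B)^{1/2}\|v\|$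 for $u\in\mathsf{D}(\Gamma)$, $v\in\mathsf{D}(\Gamma^* )$ compactly supported in a ball of radius $\le1$; (H8) $\|u\|_{W^{1,2}(M;\mathbb{C}^N)}\le c\|\Pi u\|$ on $(\mathsf{R}(\Gamma)\cup\mathsf{R}(\Gamma^* ))\cap\mathsf{D}(\Pi)$. $\Pi=\Gamma+\Gamma^*$, $\Gamma_B^*=B_1\Gamma^*B_2$, $\Pi_B=\Gamma+\Gamma_B^*$, $R_t^B=(I+it\Pi_B)^{-1}$, $\Theta_t^B=t\Gamma_B^*(I+t^2\Pi_B^2)^{-1}$. $C_\Theta>0$ is a constant for which $\|1_EU_t1_F\|\le c_K\langle|t|/\rho(E,F)\rangle^Ke^{-C_\Theta\rho(E,F)/|t|}$ for all $K\ge0$, closed $E,F$ and $U_t\in\{R_t^B,(I+t^2\Pi_B^2)^{-1},t\Pi_B(I+t^2\Pi_B^2)^{-1},\Theta_t^B\}$. A truncated dyadic cube structure $\Delta_{(0,1]}$ is fixed (constants $\delta,\eta\in(0,1)$, $a_0<a_1$; levels $\Delta_t$ for $\delta^{k+1}<t\le\delta^k$; $l(Q)=\delta^k$; $C(Q)=Q\times(0,l(Q)]$; $B(x_Q,a_0l(Q))\subseteq Q\subseteq B(x_Q,a_1l(Q))$; levels disjoint, covering a.e., nested; thin boundary $\mu(\{x\in Q:\rho(x,M\setminus Q)\le sl(Q)\})\le cs^\eta\mu(Q)$); $a=\max\{1,a_1/\delta\}$, $\langle x\rangle=\min\{1,x\}$. For each $Q$: $B_Q$ a ball of radius $a_1l(Q)$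 with $(a_0/a_1)B_Q\subseteq Q\subseteq B_Q$; $\eta_Q:M\to[0,1]$ smooth, supported in $3B_Q$, equal to $1$ on $2B_Q$; $w_Q=\eta_Qw$; $f^w_{Q,\epsilon}=w_Q-i\epsilon l(Q)\Gamma R^B_{\epsilon l(Q)}w_Q$. Let $c$ be a constant such that for all unit $w$, $Q\in\Delta_{(0,1]}$, $\epsilon>0$: $\|f^w_{Q,\epsilon}\|\le c\mu(Q)^{1/2}$, $\iint_{C(Q)}|\Theta_t^Bf^w_{Q,\epsilon}|^2d\mu\,dt/t\le c\epsilon^{-2}\mu(Q)$, and $|\mu(Q)^{-1}\int_Qf^w_{Q,\epsilon}-w|<c\epsilon^{\eta/2}$. Fix $\epsilon=(1/(2c))^{2/\eta}$ and $f^w_Q=f^w_{Q,\epsilon}$. $(\cdot,\cdot)$ is the inner product on $\mathbb{C}^N$. *)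

theory Defs
  imports "HOL-Analysis.Analysis"
begin

definition cinner :: "complex^'n \<Rightarrow> complex^'n \<Rightarrow> complex" where
  "cinner u v = (\<Sum>i\<in>UNIV. u$i * cnj (v$i))"

definition E_loc :: "'a::metric_space measure \<Rightarrow> real \<Rightarrow> real \<Rightarrow> real \<Rightarrow> bool" where
  "E_loc M c \<kappa> lam \<longleftrightarrow> c \<ge> 1 \<and> \<kappa> \<ge> 0 \<and> lam \<ge> 0 \<and>
     (\<forall>x r. r > 0 \<longrightarrow> 0 < emeasure M (ball x r) \<and> emeasure M (ball x r) < \<infinity>) \<and>
     (\<forall>x r \<alpha>. r > 0 \<and> \<alpha> \<ge> 1 \<longrightarrow>
        measure M (ball x (\<alpha> * r)) \<le> c * \<alpha> powr \<kappa> * exp (lam * \<alpha> * r) * measure M (ball x r))"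

text \<open>Truncated dyadic cube structure: D k is the level Delta_t for delta^(k+1) < t <= delta^k,
  cubes of level k have side length l(Q) = delta^k and centre xc k Q.\<close>
definition dyadic_structure ::
  "'a::metric_space measure \<Rightarrow> real \<Rightarrow> real \<Rightarrow> real \<Rightarrow> real \<Rightarrow> (nat \<Rightarrow> 'a set set) \<Rightarrow> (nat \<Rightarrow> 'a set \<Rightarrow> 'a) \<Rightarrow> bool" where
  "dyadic_structure M \<delta> \<eta> a0 a1 D xc \<longleftrightarrow>
     0 < \<delta> \<and> \<delta> < 1 \<and> 0 < \<eta> \<and> \<eta> < 1 \<and> 0 < a0 \<and> a0 < a1 \<and>
     (\<forall>k. \<forall>Q\<in>D k. Q \<in> sets M \<and> ball (xc k Q) (a0 * \<delta>^k) \<subseteq> Q \<and> Q \<subseteq> ball (xc k Q) (a1 * \<delta>^k)) \<and>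
     (\<forall>k. \<forall>Q\<in>D k. \<forall>Q'\<in>D k. Q \<noteq> Q' \<longrightarrow> Q \<inter> Q' = {}) \<and>
     (\<forall>k. AE y in M. y \<in> \<Union>(D k)) \<and>
     (\<forall>k k' Q Q'. k \<le> k' \<and> Q \<in> D k \<and> Q' \<in> D k' \<longrightarrow> Q' \<subseteq> Q \<or> Q' \<inter> Q = {}) \<and>
     (\<exists>C. \<forall>k. \<forall>Q\<in>D k. \<forall>s>0.
        measure M {y\<in>Q. -Q \<noteq> {} \<and> infdist y (-Q) \<le> s * \<delta>^k} \<le> C * s powr \<eta> * measure M Q)"

definition tent :: "real \<Rightarrow> nat \<Rightarrow> 'a set \<Rightarrow> ('a \<times> real) set" where
  "tent \<delta> k Q = Q \<times> {0<..\<delta>^k}"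

end

theory Submission
  imports Defs
begin

(* Fix a unit vector w and a cube Q, write f = f^w_Q, g = Re (w, f) and n = |f|,
   so that |g| <= n.  The hypotheses on f give (i) the average of g over Q exceeds 1/2 (because
   the average of f is 1/2-close to w, by the choice of epsilon) and (ii) the L2 mass of n is at
   most c^2 mu(Q).  Call a dyadic subcube P of Q bad if the average of g on P is below alpha or
   the average of n on P exceeds 1/alpha, and let {Q_k} be the maximal bad subcubes.  They are
   pairwise disjoint, countable (each has positive measure), and every cube whose Carleson box
   meets E_Q^* is good, since the box of a bad cube lies in the box of a maximal bad cube.
   The measure estimate is a stopping-time argument: on each bad cube the mass of g is bounded
   by the integral of the quadratic majorant n^2/(2L) + alpha + (L alpha/2) n, on the rest of Q
   by the same majorant plus L/2, so the lower bound (i) and the energy bound (ii) force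
   mu(E_Q) > mu(Q)/(16 c^2) once alpha is small in terms of c. *)

lemma cinner_norm_bound:
  fixes w v :: "complex^'n"
  shows "norm (cinner w v) \<le> norm w * norm v"
proof -
  have "norm (cinner w v) \<le> (\<Sum>i\<in>UNIV. norm (w$i) * norm (v$i))"
    unfolding cinner_def using norm_sum[of "\<lambda>i. w$i * cnj (v$i)" UNIV] by (simp add: norm_mult)
  also have "\<dots> \<le> L2_set (\<lambda>i. norm (w$i)) UNIV * L2_set (\<lambda>i. norm (v$i)) UNIV"
    using L2_set_mult_ineq[of "\<lambda>i. norm (w$i)" "\<lambda>i. norm (v$i)" UNIV] by simp
  finally show ?thesis by (simp add: norm_vec_def)
qed

lemma Re_cinner_self: "Re (cinner w w) = (norm w)^2"
proof -
  have "Re (cinner w w) = (\<Sum>i\<in>UNIV. (norm (w$i))^2)"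
    unfolding cinner_def Re_sum by (simp add: complex_mult_cnj cmod_power2)
  also have "\<dots> = (norm w)^2"
    by (simp add: norm_vec_def L2_set_def sum_nonneg)
  finally show ?thesis .
qed

lemma bounded_linear_Re_cinner: "bounded_linear (\<lambda>v::complex^'n. Re (cinner w v))"
proof (rule bounded_linear_intro[where K="norm w"])
  show "Re (cinner w (x + y)) = Re (cinner w x) + Re (cinner w y)" for x y
    by (simp add: cinner_def sum.distrib algebra_simps)
  show "Re (cinner w (r *\<^sub>R x)) = r *\<^sub>R Re (cinner w x)" for r x
    unfolding cinner_def vector_scaleR_component
    by (simp add: scaleR_conv_of_real sum_distrib_left algebra_simps Re_sum)
  show "norm (Re (cinner w x)) \<le> norm x * norm w" for x
    using cinner_norm_bound[of w x] abs_Re_le_cmod[of "cinner w x"] by (simp add: mult.commute)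
qed

lemma Re_cinner_set_integral:
  fixes f :: "'a \<Rightarrow> complex^'n"
  assumes "set_integrable M A f"
  shows "Re (cinner w (LINT x:A|M. f x)) = (LINT x:A|M. Re (cinner w (f x)))"
proof -
  interpret bounded_linear "\<lambda>v::complex^'n. Re (cinner w v)"
    by (rule bounded_linear_Re_cinner)
  have "(LINT x:A|M. Re (cinner w (f x))) = (\<integral>x. Re (cinner w (indicator A x *\<^sub>R f x)) \<partial>M)"
    unfolding set_lebesgue_integral_def by (simp only: scaleR)
  also have "\<dots> = Re (cinner w (LINT x:A|M. f x))"
    unfolding set_lebesgue_integral_def
    by (rule integral_bounded_linear[OF bounded_linear_Re_cinner])
      (use assms in \<open>simp add: set_integrable_def\<close>)
  finally show ?thesis ..
qed

lemma sq_plus_one_ge: "(t::real) \<le> t^2 + 1"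
proof -
  have "2 * t \<le> t^2 + 1"
    using zero_le_power2[of "t - 1"] by (simp add: power2_diff)
  then show ?thesis using zero_le_power2[of t] by linarith
qed

lemma set_integrable_square_dominated:
  fixes f :: "'a \<Rightarrow> 'b::{banach, second_countable_topology}"
    and h :: "'a \<Rightarrow> 'c::{banach, second_countable_topology}"
  assumes "h \<in> borel_measurable M" and "integrable M (\<lambda>x. (norm (f x))^2)"
    and "\<And>x. norm (h x) \<le> norm (f x)" and "A \<in> sets M" "emeasure M A < \<infinity>"
  shows "set_integrable M A h"
  unfolding set_integrable_def
proof (rule Bochner_Integration.integrable_bound)
  show "integrable M (\<lambda>x. indicator A x * ((norm (f x))^2 + 1))"
    using integrable_mult_indicator[OF assms(4,2)] integrable_real_indicator[OF assms(4,5)]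
    by (simp add: distrib_left)
  show "(\<lambda>x. indicat_real A x *\<^sub>R h x) \<in> borel_measurable M"
    using assms(1,4) by measurable
  show "AE x in M. norm (indicat_real A x *\<^sub>R h x) \<le> norm (indicator A x * ((norm (f x))^2 + 1))"
    using assms(3) order_trans[OF assms(3) sq_plus_one_ge] by (auto simp: indicator_def)
qed

lemma set_integral_nonneg:
  fixes f :: "'a \<Rightarrow> real"
  assumes "\<And>x. 0 \<le> f x"
  shows "0 \<le> (LINT x:A|M. f x)"
  unfolding set_lebesgue_integral_def
  using assms by (intro Bochner_Integration.integral_nonneg) (simp add: indicator_def)

lemma set_integral_le_integral:
  fixes f :: "'a \<Rightarrow> real"
  assumes "\<And>x. 0 \<le> f x" "integrable M f" "A \<in> sets M"
  shows "(LINT x:A|M. f x) \<le> (\<integral>x. f x \<partial>M)"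
  unfolding set_lebesgue_integral_def
  using assms integrable_mult_indicator[OF assms(3,2)]
  by (intro integral_mono) (auto simp: indicator_def)

lemma finite_emeasure_subset:
  assumes "A \<subseteq> Q" "Q \<in> sets M" "emeasure M Q < \<infinity>"
  shows "emeasure M A < \<infinity>"
  using emeasure_mono[OF assms(1,2)] assms(3) by (simp add: le_less_trans)

lemma set_integral_split:
  fixes h :: "'a \<Rightarrow> real"
  assumes "set_integrable M A h" "A \<in> sets M" "B \<in> sets M" "B \<subseteq> A"
  shows "(LINT x:A|M. h x) = (LINT x:A - B|M. h x) + (LINT x:B|M. h x)"
proof -
  have "(LINT x:(A - B) \<union> B|M. h x) = (LINT x:A - B|M. h x) + (LINT x:B|M. h x)"
    using assms by (intro set_integral_Un) (auto intro: set_integrable_subset)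
  moreover have "(A - B) \<union> B = A" using assms(4) by auto
  ultimately show ?thesis by simp
qed

lemma countable_disjoint_positive_measure:
  assumes disj: "disjoint S"
    and S: "\<And>P. P \<in> S \<Longrightarrow> P \<in> sets M \<and> P \<subseteq> Q \<and> 0 < measure M P"
    and Q: "Q \<in> sets M" "emeasure M Q < \<infinity>"
  shows "countable S"
proof -
  define T where "T n = {P\<in>S. 1 / real (Suc n) < measure M P}" for n
  have "S = (\<Union>n. T n)"
  proof (intro equalityI subsetI)
    fix P assume P: "P \<in> S"
    then obtain n where "inverse (real (Suc n)) < measure M P"
      using S reals_Archimedean by blast
    then show "P \<in> (\<Union>n. T n)" using P by (auto simp: T_def inverse_eq_divide)
  qed (auto simp: T_def)
  moreover have "finite (T n)" for n
  proof -
    have "finite (T n) \<and> card (T n) \<le> nat \<lceil>real (Suc n) * measure M Q\<rceil>"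
    proof (rule finite_if_finite_subsets_card_bdd)
      fix G assume G: "G \<subseteq> T n" "finite G"
      then have GS: "G \<subseteq> S" by (auto simp: T_def)
      have fm: "P \<in> fmeasurable M" if "P \<in> G" for P
        using that GS S[of P] Q emeasure_mono[of P Q M]
        by (intro fmeasurableI) (auto dest: le_less_trans)
      have "real (card G) / real (Suc n) = (\<Sum>P\<in>G. 1 / real (Suc n))" by simp
      also have "\<dots> \<le> (\<Sum>P\<in>G. measure M P)"
        using G by (intro sum_mono) (auto simp: T_def)
      also have "\<dots> = measure M (\<Union>G)"
        using G fm pairwise_subset[OF disj GS] by (intro measure_Union'[symmetric]) auto
      also have "\<dots> \<le> measure M Q"
        using G(2) GS S Q by (intro measure_mono_fmeasurable) (auto simp: fmeasurable_def)
      finally show "card G \<le> nat \<lceil>real (Suc n) * measure M Q\<rceil>"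
        by (simp add: field_simps) linarith
    qed
    then show ?thesis by blast
  qed
  ultimately show ?thesis by (auto intro: countable_finite)
qed

text \<open>Nonnegativity of a set integral passes from the members of a countable disjoint family
  to their union (by monotone exhaustion through finite subfamilies).\<close>

lemma set_integral_Union_nonneg:
  fixes h :: "'a \<Rightarrow> real"
  assumes S: "countable S" "disjoint S" "S \<subseteq> sets M"
    and int: "set_integrable M (\<Union>S) h"
    and nonneg: "\<And>P. P \<in> S \<Longrightarrow> 0 \<le> (LINT x:P|M. h x)"
  shows "0 \<le> (LINT x:\<Union>S|M. h x)"
proof (cases "S = {}")
  case True
  then show ?thesis by (simp add: set_lebesgue_integral_def)
next
  case False
  define P where "P = from_nat_into S"
  define U where "U i = \<Union>(P ` {..<i})" for i
  have PS: "P i \<in> S" for i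
    unfolding P_def using from_nat_into[OF False] .
  have U_sets: "U i \<in> sets M" for i
    unfolding U_def using PS S(3) by auto
  have "(\<Union>i. U i) = \<Union>S"
  proof
    show "(\<Union>i. U i) \<subseteq> \<Union>S" unfolding U_def using PS by auto
    show "\<Union>S \<subseteq> (\<Union>i. U i)"
    proof
      fix x assume "x \<in> \<Union>S"
      then obtain j where "x \<in> P j"
        using range_from_nat_into[OF False S(1)] unfolding P_def by auto
      then have "x \<in> U (Suc j)" unfolding U_def by auto
      then show "x \<in> (\<Union>i. U i)" by blast
    qed
  qed
  moreover have "incseq U"
    unfolding incseq_def U_def by (meson Union_mono image_mono lessThan_subset_iff)
  ultimately have lim: "(\<lambda>i. LINT x:U i|M. h x) \<longlonglongrightarrow> (LINT x:\<Union>S|M. h x)"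
    using set_integral_cont_up[where A=U and M=M and f=h] U_sets int by simp
  have "0 \<le> (LINT x:U i|M. h x)" for i
  proof -
    have "disjoint_family_on id (P ` {..<i})"
      using pairwise_subset[OF S(2)] PS by (auto simp: disjoint_family_on_def pairwise_def disjnt_def)
    moreover have "set_integrable M Q h" if "Q \<in> P ` {..<i}" for Q
      using set_integrable_subset[OF int] that PS S(3) by blast
    ultimately have "(LINT x:U i|M. h x) = (\<Sum>Q\<in>P ` {..<i}. LINT x:Q|M. h x)"
      unfolding U_def using set_integral_finite_Union[of "P ` {..<i}" id M h] PS S(3) by auto
    then show ?thesis using nonneg PS by (auto intro: sum_nonneg)
  qed
  then show ?thesis using lim by (intro LIMSEQ_le_const) auto
qed

lemma le_quadratic_majorant:
  fixes t L :: real
  assumes "0 < L"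
  shows "t \<le> (1 / (2 * L)) * t^2 + L / 2"
proof -
  have "2 * L * t \<le> t^2 + L^2"
    using zero_le_power2[of "t - L"] by (simp add: power2_diff algebra_simps)
  then show ?thesis using assms by (simp add: field_simps power2_eq_square)
qed

text \<open>A real function g dominated in absolute value by a square-integrable function n.
  In the application g is the component Re (w, f) of a vector field f and n = |f|.\<close>

locale square_dominated =
  fixes M :: "'a measure" and g n :: "'a \<Rightarrow> real"
  assumes g_measurable: "g \<in> borel_measurable M"
    and n_measurable: "n \<in> borel_measurable M"
    and square_integrable: "integrable M (\<lambda>x. (n x)^2)"
    and g_le_n: "\<And>x. \<bar>g x\<bar> \<le> n x"
begin

lemma n_nonneg: "0 \<le> n x"
  using g_le_n[of x] by linarith

lemma set_integrable_finite:
  assumes "A \<in> sets M" "emeasure M A < \<infinity>"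
  shows "set_integrable M A g" "set_integrable M A n" "set_integrable M A (\<lambda>x. (n x)^2)"
proof -
  have n_sq: "integrable M (\<lambda>x. (norm (n x))^2)"
    using square_integrable by simp
  show "set_integrable M A g"
    using set_integrable_square_dominated[OF g_measurable n_sq _ assms] g_le_n n_nonneg by simp
  show "set_integrable M A n"
    using set_integrable_square_dominated[OF n_measurable n_sq _ assms] by simp
  show "set_integrable M A (\<lambda>x. (n x)^2)"
    unfolding set_integrable_def using integrable_mult_indicator[OF assms(1) square_integrable] by simp
qed

lemma set_integral_quadratic:
  assumes "A \<in> sets M" "emeasure M A < \<infinity>"
  shows "set_integrable M A (\<lambda>x. a * (n x)^2 + b + d * n x)"
    and "(LINT x:A|M. a * (n x)^2 + b + d * n x)
           = a * (LINT x:A|M. (n x)^2) + b * measure M A + d * (LINT x:A|M. n x)"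
proof -
  note ints = set_integrable_finite[OF assms]
  have const: "set_integrable M A (\<lambda>_. b)"
    unfolding set_integrable_def
    using integrable_mult_right[OF integrable_real_indicator[OF assms], of b] by (simp add: mult.commute)
  show "set_integrable M A (\<lambda>x. a * (n x)^2 + b + d * n x)"
    using ints const by auto
  show "(LINT x:A|M. a * (n x)^2 + b + d * n x)
           = a * (LINT x:A|M. (n x)^2) + b * measure M A + d * (LINT x:A|M. n x)"
    using ints const assms by (simp add: set_integral_add set_integral_const less_top[symmetric])
qed

lemma set_integral_n_le:
  assumes "A \<in> sets M" "emeasure M A < \<infinity>" "0 < L"
  shows "(LINT x:A|M. n x) \<le> (1 / (2 * L)) * (LINT x:A|M. (n x)^2) + L / 2 * measure M A"
proof -
  have "(LINT x:A|M. n x) \<le> (LINT x:A|M. (1 / (2 * L)) * (n x)^2 + L / 2 + 0 * n x)"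
  proof (rule set_integral_mono)
    show "set_integrable M A n" by (rule set_integrable_finite(2)[OF assms(1,2)])
    show "set_integrable M A (\<lambda>x. (1 / (2 * L)) * (n x)^2 + L / 2 + 0 * n x)"
      by (rule set_integral_quadratic(1)[OF assms(1,2)])
    show "n x \<le> (1 / (2 * L)) * (n x)^2 + L / 2 + 0 * n x" for x
      using le_quadratic_majorant[OF assms(3), of "n x"] by simp
  qed
  then show ?thesis
    unfolding set_integral_quadratic(2)[OF assms(1,2)] by simp
qed

definition majorant :: "real \<Rightarrow> real \<Rightarrow> 'a \<Rightarrow> real" where
  "majorant L \<alpha> x = (1 / (2 * L)) * (n x)^2 + \<alpha> + (L * \<alpha> / 2) * n x"

lemma set_integral_majorant:
  assumes "A \<in> sets M" "emeasure M A < \<infinity>"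
  shows "set_integrable M A (majorant L \<alpha>)"
    and "(LINT x:A|M. majorant L \<alpha> x)
           = (1 / (2 * L)) * (LINT x:A|M. (n x)^2) + \<alpha> * measure M A + (L * \<alpha> / 2) * (LINT x:A|M. n x)"
  unfolding majorant_def by (rule set_integral_quadratic[OF assms])+

lemma bad_set_integral_le:
  assumes A: "A \<in> sets M" "emeasure M A < \<infinity>" and L: "0 < L" and \<alpha>: "0 < \<alpha>"
    and bad: "(LINT x:A|M. g x) < \<alpha> * measure M A \<or> measure M A < \<alpha> * (LINT x:A|M. n x)"
  shows "(LINT x:A|M. g x) \<le> (LINT x:A|M. majorant L \<alpha> x)"
proof -
  have n2: "0 \<le> (1 / (2 * L)) * (LINT x:A|M. (n x)^2)"
    using L by (simp add: set_integral_nonneg)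
  have n1: "0 \<le> (L * \<alpha> / 2) * (LINT x:A|M. n x)"
    using L \<alpha> by (simp add: set_integral_nonneg n_nonneg)
  have "0 \<le> \<alpha> * measure M A" using \<alpha> by simp
  note majorant = set_integral_majorant(2)[OF A, of L \<alpha>]
  from bad show ?thesis
  proof
    assume "(LINT x:A|M. g x) < \<alpha> * measure M A"
    then show ?thesis using n1 n2 majorant by linarith
  next
    assume small: "measure M A < \<alpha> * (LINT x:A|M. n x)"
    have "(LINT x:A|M. g x) \<le> (LINT x:A|M. n x)"
      using set_integrable_finite[OF A] g_le_n by (intro set_integral_mono) (auto simp: abs_le_iff)
    also have "\<dots> \<le> (1 / (2 * L)) * (LINT x:A|M. (n x)^2) + L / 2 * measure M A"
      by (rule set_integral_n_le[OF A L])
    also have "\<dots> \<le> (1 / (2 * L)) * (LINT x:A|M. (n x)^2) + (L * \<alpha> / 2) * (LINT x:A|M. n x)"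
      using small L by simp
    finally show ?thesis using \<open>0 \<le> \<alpha> * measure M A\<close> majorant by linarith
  qed
qed

lemma bad_union_integral_le:
  assumes Q: "Q \<in> sets M" "emeasure M Q < \<infinity>" and L: "0 < L" and \<alpha>: "0 < \<alpha>"
    and S: "countable S" "disjoint S" "\<And>P. P \<in> S \<Longrightarrow> P \<in> sets M \<and> P \<subseteq> Q"
    and bad: "\<And>P. P \<in> S \<Longrightarrow>
        (LINT x:P|M. g x) < \<alpha> * measure M P \<or> measure M P < \<alpha> * (LINT x:P|M. n x)"
  shows "(LINT x:\<Union>S|M. g x) \<le> (LINT x:\<Union>S|M. majorant L \<alpha> x)"
proof -
  have finite: "emeasure M A < \<infinity>" if "A \<subseteq> Q" for A
    using finite_emeasure_subset[OF that Q] .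
  have U: "\<Union>S \<in> sets M" "\<Union>S \<subseteq> Q"
    using S by (auto intro!: sets.countable_Union)
  have ints: "set_integrable M A (majorant L \<alpha>)" "set_integrable M A g"
    if "A \<in> sets M" "A \<subseteq> Q" for A
    using set_integral_majorant(1) set_integrable_finite(1) that finite by blast+
  have "0 \<le> (LINT x:\<Union>S|M. majorant L \<alpha> x - g x)"
  proof (rule set_integral_Union_nonneg[OF S(1,2)])
    show "S \<subseteq> sets M" using S(3) by auto
    show "set_integrable M (\<Union>S) (\<lambda>x. majorant L \<alpha> x - g x)"
      using ints[OF U] by auto
    show "0 \<le> (LINT x:P|M. majorant L \<alpha> x - g x)" if "P \<in> S" for P
      using bad_set_integral_le[OF _ _ L \<alpha> bad[OF that]] S(3)[OF that] finite ints
      by (simp add: set_integral_diff(2))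
  qed
  then show ?thesis using ints[OF U] by (simp add: set_integral_diff(2))
qed

text \<open>Off the bad sets only the trivial bound g \<le> n \<le> n^2/(2L) + L/2 is available.\<close>
lemma remainder_integral_le:
  assumes E: "E \<in> sets M" "emeasure M E < \<infinity>" and L: "0 < L" and \<alpha>: "0 \<le> \<alpha>"
  shows "(LINT x:E|M. g x) \<le> (LINT x:E|M. majorant L \<alpha> x) + L / 2 * measure M E"
proof -
  have "(LINT x:E|M. g x) \<le> (LINT x:E|M. (1 / (2 * L)) * (n x)^2 + (\<alpha> + L / 2) + (L * \<alpha> / 2) * n x)"
  proof (rule set_integral_mono)
    show "set_integrable M E g" by (rule set_integrable_finite(1)[OF E])
    show "set_integrable M E (\<lambda>x. (1 / (2 * L)) * (n x)^2 + (\<alpha> + L / 2) + (L * \<alpha> / 2) * n x)"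
      by (rule set_integral_quadratic(1)[OF E])
    show "g x \<le> (1 / (2 * L)) * (n x)^2 + (\<alpha> + L / 2) + (L * \<alpha> / 2) * n x" for x
    proof -
      have "0 \<le> (L * \<alpha> / 2) * n x" using L \<alpha> n_nonneg by simp
      then show ?thesis
        using abs_le_D1[OF g_le_n[of x]] le_quadratic_majorant[OF L, of "n x"] \<alpha> by linarith
    qed
  qed
  then show ?thesis
    unfolding set_integral_majorant(2)[OF E] set_integral_quadratic(2)[OF E] by (simp add: algebra_simps)
qed

lemma majorant_integral_le:
  assumes Q: "Q \<in> sets M" "emeasure M Q < \<infinity>"
    and c: "0 < c" and energy: "(\<integral>x. (n x)^2 \<partial>M) \<le> c^2 * measure M Q"
    and L: "0 < L" and \<alpha>: "0 \<le> \<alpha>"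
  shows "(LINT x:Q|M. majorant L \<alpha> x) \<le> (c^2 / (2 * L) + \<alpha> + L * \<alpha> * c / 2) * measure M Q"
proof -
  define m where "m = measure M Q"
  have n2_Q: "(LINT x:Q|M. (n x)^2) \<le> c^2 * m"
    using set_integral_le_integral[OF _ square_integrable Q(1)] energy unfolding m_def by simp
  have n_Q: "(LINT x:Q|M. n x) \<le> c * m"
  proof -
    have "(LINT x:Q|M. n x) \<le> (1 / (2 * c)) * (LINT x:Q|M. (n x)^2) + c / 2 * m"
      using set_integral_n_le[OF Q c] unfolding m_def .
    also have "\<dots> \<le> (1 / (2 * c)) * (c^2 * m) + c / 2 * m"
      using n2_Q c by (intro add_mono mult_left_mono) auto
    also have "\<dots> = c * m" using c by (simp add: field_simps power2_eq_square)
    finally show ?thesis .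
  qed
  have "(LINT x:Q|M. majorant L \<alpha> x)
      = (1 / (2 * L)) * (LINT x:Q|M. (n x)^2) + \<alpha> * m + (L * \<alpha> / 2) * (LINT x:Q|M. n x)"
    unfolding m_def by (rule set_integral_majorant(2)[OF Q])
  also have "\<dots> \<le> (1 / (2 * L)) * (c^2 * m) + \<alpha> * m + (L * \<alpha> / 2) * (c * m)"
    using n2_Q n_Q L \<alpha> by (intro add_mono mult_left_mono) auto
  also have "\<dots> = (c^2 / (2 * L) + \<alpha> + L * \<alpha> * c / 2) * m"
    by (simp add: field_simps)
  finally show ?thesis unfolding m_def .
qed

theorem measure_outside_bad_sets:
  assumes Q: "Q \<in> sets M" "emeasure M Q < \<infinity>"
    and c: "0 < c" and energy: "(\<integral>x. (n x)^2 \<partial>M) \<le> c^2 * measure M Q"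
    and large: "measure M Q / 2 < (LINT x:Q|M. g x)"
    and S: "countable S" "disjoint S" "\<And>P. P \<in> S \<Longrightarrow> P \<in> sets M \<and> P \<subseteq> Q"
    and bad: "\<And>P. P \<in> S \<Longrightarrow>
        (LINT x:P|M. g x) < \<alpha> * measure M P \<or> measure M P < \<alpha> * (LINT x:P|M. n x)"
    and \<alpha>: "0 < \<alpha>" "\<alpha> \<le> 1/8" "\<alpha> \<le> 1 / (64 * c^3)"
  shows "measure M Q / (16 * c^2) < measure M (Q - \<Union>S)"
proof -
  define L where "L = 8 * c^2"
  define m where "m = measure M Q"
  have L: "0 < L" using c by (simp add: L_def)
  have U: "\<Union>S \<in> sets M" "\<Union>S \<subseteq> Q"
    using S by (auto intro!: sets.countable_Union)
  have E: "Q - \<Union>S \<in> sets M" "emeasure M (Q - \<Union>S) < \<infinity>"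
    using Q U finite_emeasure_subset[of "Q - \<Union>S" Q M] by auto
  have "m / 2 < (LINT x:Q - \<Union>S|M. g x) + (LINT x:\<Union>S|M. g x)"
    using large set_integral_split[OF set_integrable_finite(1)[OF Q] Q(1) U] unfolding m_def by simp
  also have "\<dots> \<le> ((LINT x:Q - \<Union>S|M. majorant L \<alpha> x) + L / 2 * measure M (Q - \<Union>S))
      + (LINT x:\<Union>S|M. majorant L \<alpha> x)"
    using remainder_integral_le[OF E L] bad_union_integral_le[OF Q L \<alpha>(1) S bad] \<alpha>(1)
    by (intro add_mono) auto
  also have "\<dots> = (LINT x:Q|M. majorant L \<alpha> x) + L / 2 * measure M (Q - \<Union>S)"
    using set_integral_split[OF set_integral_majorant(1)[OF Q] Q(1) U] by simp
  also have "\<dots> \<le> (1/16 + \<alpha> + 4 * (c^3 * \<alpha>)) * m + 4 * c^2 * measure M (Q - \<Union>S)"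
  proof -
    have constants: "c^2 / (2 * L) + \<alpha> + L * \<alpha> * c / 2 = 1/16 + \<alpha> + 4 * (c^3 * \<alpha>)"
      using c by (simp add: L_def field_simps power2_eq_square power3_eq_cube)
    have "(LINT x:Q|M. majorant L \<alpha> x) \<le> (1/16 + \<alpha> + 4 * (c^3 * \<alpha>)) * m"
      using majorant_integral_le[OF Q c energy L less_imp_le[OF \<alpha>(1)]] unfolding constants m_def .
    moreover have "L / 2 = 4 * c^2" by (simp add: L_def)
    ultimately show ?thesis by simp
  qed
  also have "\<dots> \<le> (1/4) * m + 4 * c^2 * measure M (Q - \<Union>S)"
  proof -
    have "c^3 * \<alpha> \<le> 1 / 64" using \<alpha>(3) c by (simp add: field_simps)
    then show ?thesis using \<alpha>(2) by (intro add_mono mult_right_mono) (auto simp: m_def)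
  qed
  finally have "m / 4 < 4 * c^2 * measure M (Q - \<Union>S)" by simp
  then show ?thesis
    using c unfolding m_def by (simp add: field_simps)
qed

end

lemma square_dominated_Re_cinner:
  fixes f :: "'a \<Rightarrow> complex^'n"
  assumes w: "norm w = 1"
    and f: "f \<in> borel_measurable M" "integrable M (\<lambda>x. (norm (f x))^2)"
  shows "square_dominated M (\<lambda>x. Re (cinner w (f x))) (\<lambda>x. norm (f x))"
proof
  have "(\<lambda>v::complex^'n. Re (cinner w v)) \<in> borel_measurable borel"
    using bounded_linear_Re_cinner
    by (intro borel_measurable_continuous_onI linear_continuous_on)
  then show "(\<lambda>x. Re (cinner w (f x))) \<in> borel_measurable M"
    using f(1) by (rule measurable_compose[rotated])
  show "(\<lambda>x. norm (f x)) \<in> borel_measurable M" using f(1) by measurable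
  show "integrable M (\<lambda>x. (norm (f x))^2)" by (rule f(2))
  show "\<bar>Re (cinner w (f x))\<bar> \<le> norm (f x)" for x
    using cinner_norm_bound[of w "f x"] abs_Re_le_cmod[of "cinner w (f x)"] w by simp
qed

lemma Re_cinner_average:
  fixes f :: "'a \<Rightarrow> complex^'n"
  assumes "set_integrable M A f"
  shows "Re (cinner w ((1 / measure M A) *\<^sub>R (LINT x:A|M. f x)))
           = (1 / measure M A) * (LINT x:A|M. Re (cinner w (f x)))"
  by (simp only: linear_scale[OF bounded_linear.linear[OF bounded_linear_Re_cinner]]
      Re_cinner_set_integral[OF assms] real_scaleR_def)

lemma average_close_imp_large:
  fixes f :: "'a \<Rightarrow> complex^'n"
  assumes w: "norm w = 1" and A: "0 < measure M A" "set_integrable M A f"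
    and close: "norm ((1 / measure M A) *\<^sub>R (LINT x:A|M. f x) - w) < 1/2"
  shows "measure M A / 2 < (LINT x:A|M. Re (cinner w (f x)))"
proof -
  define v where "v = (1 / measure M A) *\<^sub>R (LINT x:A|M. f x)"
  have "Re (cinner w v) = Re (cinner w w) + Re (cinner w (v - w))"
    using linear_diff[OF bounded_linear.linear[OF bounded_linear_Re_cinner], of w v w] by simp
  moreover have "Re (cinner w w) = 1" using Re_cinner_self[of w] w by simp
  moreover have "\<bar>Re (cinner w (v - w))\<bar> \<le> norm (v - w)"
    using cinner_norm_bound[of w "v - w"] abs_Re_le_cmod[of "cinner w (v - w)"] w by simp
  ultimately have "1/2 < Re (cinner w v)" using close unfolding v_def by linarith
  then show ?thesis
    using Re_cinner_average[OF A(2), of w] A(1) unfolding v_def by (simp add: field_simps)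
qed

lemma average_conditions_fail:
  fixes f :: "'a \<Rightarrow> complex^'n"
  assumes A: "0 < measure M A" "set_integrable M A f" and \<alpha>: "0 < \<alpha>"
    and fail: "\<not> (\<alpha> \<le> Re (cinner w ((1 / measure M A) *\<^sub>R (LINT x:A|M. f x))) \<and>
                 (1 / measure M A) * (LINT x:A|M. norm (f x)) \<le> 1 / \<alpha>)"
  shows "(LINT x:A|M. Re (cinner w (f x))) < \<alpha> * measure M A \<or>
         measure M A < \<alpha> * (LINT x:A|M. norm (f x))"
  using fail A \<alpha> unfolding Re_cinner_average[OF A(2)] by (auto simp: field_simps)

text \<open>Unpacking the dyadic structure; note that the nesting property already contains
  the disjointness of distinct cubes of one level.\<close>
lemma dyadic_structureD:
  assumes "dyadic_structure M \<delta> \<eta> a0 a1 D xc"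
  shows "0 < \<delta>" "\<delta> < 1" "0 < \<eta>" "0 < a0" "a0 < a1"
    and "\<And>k P. P \<in> D k \<Longrightarrow>
           P \<in> sets M \<and> ball (xc k P) (a0 * \<delta>^k) \<subseteq> P \<and> P \<subseteq> ball (xc k P) (a1 * \<delta>^k)"
    and "\<And>k k' P P'. k \<le> k' \<Longrightarrow> P \<in> D k \<Longrightarrow> P' \<in> D k' \<Longrightarrow> P' \<subseteq> P \<or> P' \<inter> P = {}"
  using assms unfolding dyadic_structure_def by (elim conjE; metis)+

lemma dyadic_cube_measure:
  assumes sets: "sets M = sets borel" and Eloc: "E_loc M cE \<kappa> lam"
    and dy: "dyadic_structure M \<delta> \<eta> a0 a1 D xc" and P: "P \<in> D j"
  shows "P \<in> sets M \<and> emeasure M P < \<infinity> \<and> 0 < measure M P"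
proof -
  note dy = dyadic_structureD[OF dy]
  have r: "0 < a0 * \<delta>^j" "0 < a1 * \<delta>^j" using dy(1,4,5) by simp_all
  have cube: "P \<in> sets M" "ball (xc j P) (a0 * \<delta>^j) \<subseteq> P" "P \<subseteq> ball (xc j P) (a1 * \<delta>^j)"
    using dy(6)[OF P] by blast+
  have ball: "0 < emeasure M (ball x r) \<and> emeasure M (ball x r) < \<infinity>" if "0 < r" for x r
    using Eloc that unfolding E_loc_def by blast
  have "emeasure M P \<le> emeasure M (ball (xc j P) (a1 * \<delta>^j))"
    using cube(3) sets by (intro emeasure_mono) auto
  then have finite: "emeasure M P < \<infinity>" using ball[OF r(2)] by (meson le_less_trans)
  have "emeasure M (ball (xc j P) (a0 * \<delta>^j)) \<le> emeasure M P"
    using cube(1,2) by (intro emeasure_mono)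
  then have "0 < emeasure M P" using ball[OF r(1)] by (meson less_le_trans)
  then have "0 < measure M P"
    using finite by (simp add: emeasure_eq_ennreal_measure less_top[symmetric])
  then show ?thesis using cube(1) finite by blast
qed

definition maximal_cubes :: "(nat \<times> 'a set) set \<Rightarrow> (nat \<times> 'a set) set" where
  "maximal_cubes B = {(j, P) \<in> B. \<forall>(j', P') \<in> B. j' < j \<longrightarrow> \<not> P \<subseteq> P'}"

lemma maximal_cubes_subset: "maximal_cubes B \<subseteq> B"
  unfolding maximal_cubes_def by auto

lemma maximal_cubes_cover:
  assumes "(k, P) \<in> B"
  shows "\<exists>j P'. (j, P') \<in> maximal_cubes B \<and> j \<le> k \<and> P \<subseteq> P'"
proof -
  define J where "J = {j. \<exists>P'. (j, P') \<in> B \<and> P \<subseteq> P'}"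
  have "k \<in> J" using assms unfolding J_def by auto
  define j0 where "j0 = (LEAST j. j \<in> J)"
  have "j0 \<in> J" unfolding j0_def using \<open>k \<in> J\<close> by (rule LeastI)
  then obtain P0 where P0: "(j0, P0) \<in> B" "P \<subseteq> P0" unfolding J_def by auto
  have "j0 \<le> k" unfolding j0_def using \<open>k \<in> J\<close> by (rule Least_le)
  moreover have "(j0, P0) \<in> maximal_cubes B"
    unfolding maximal_cubes_def
  proof (clarsimp simp: P0(1))
    fix j' P' assume "(j', P') \<in> B" "j' < j0" "P0 \<subseteq> P'"
    then have "j' \<in> J" unfolding J_def using P0(2) by auto
    then have "j0 \<le> j'" unfolding j0_def by (rule Least_le)
    with \<open>j' < j0\<close> show False by simp
  qed
  ultimately show ?thesis using P0(2) by blast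
qed

lemma maximal_cubes_disjoint:
  assumes nested: "\<And>k k' P P'. k \<le> k' \<Longrightarrow> P \<in> D k \<Longrightarrow> P' \<in> D k' \<Longrightarrow> P' \<subseteq> P \<or> P' \<inter> P = {}"
    and B: "B \<subseteq> {(j, P). P \<in> D j}"
  assumes "(j, P) \<in> maximal_cubes B" "(j', P') \<in> maximal_cubes B" "(j, P) \<noteq> (j', P')"
  shows "P \<inter> P' = {}"
proof -
  have ordered: "P \<inter> P' = {}"
    if jj': "j \<le> j'" and K: "(j, P) \<in> maximal_cubes B" "(j', P') \<in> maximal_cubes B"
      and ne: "(j, P) \<noteq> (j', P')" for j P j' P'
  proof -
    have D: "P \<in> D j" "P' \<in> D j'" using K B maximal_cubes_subset by blast+
    consider "j < j'" | "j = j'" using jj' by linarith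
    then show ?thesis
    proof cases
      case 1
      then have "\<not> P' \<subseteq> P" using K unfolding maximal_cubes_def by auto
      then show ?thesis using nested[OF jj' D] by auto
    next
      case 2
      then show ?thesis using nested[OF jj' D] nested[of j' j P' P] D ne by auto
    qed
  qed
  show ?thesis
    using ordered[of j j' P P'] ordered[of j' j P' P] assms(3-5) by (cases "j \<le> j'") auto
qed

lemma tent_mono:
  assumes "0 < \<delta>" "\<delta> \<le> 1" "j \<le> k" "P \<subseteq> P'"
  shows "tent \<delta> k P \<subseteq> tent \<delta> j P'"
  using power_decreasing[OF assms(3), of \<delta>] assms unfolding tent_def by auto

lemma tent_subset_maximal_tents:
  assumes "0 < \<delta>" "\<delta> \<le> 1" "(k, P) \<in> B"
  shows "tent \<delta> k P \<subseteq> (\<Union>(j, P')\<in>maximal_cubes B. tent \<delta> j P')"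
proof -
  obtain j P' where "(j, P') \<in> maximal_cubes B" "j \<le> k" "P \<subseteq> P'"
    using maximal_cubes_cover[OF assms(3)] by blast
  then show ?thesis using tent_mono[OF assms(1,2), of j k P P'] by fastforce
qed

theorem stopping_time_cubes:
  fixes M :: "'a::metric_space measure" and g n :: "'a \<Rightarrow> real" and good :: "'a set \<Rightarrow> bool"
  assumes sd: "square_dominated M g n"
    and dy: "dyadic_structure M \<delta> \<eta> a0 a1 D xc"
    and cubes: "\<And>j P. P \<in> D j \<Longrightarrow> P \<in> sets M \<and> emeasure M P < \<infinity> \<and> 0 < measure M P"
    and Q: "Q \<in> D k"
    and c: "0 < c" and energy: "(\<integral>x. (n x)^2 \<partial>M) \<le> c^2 * measure M Q"
    and large: "measure M Q / 2 < (LINT x:Q|M. g x)"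
    and \<alpha>: "0 < \<alpha>" "\<alpha> \<le> 1/8" "\<alpha> \<le> 1 / (64 * c^3)"
    and bad: "\<And>j P. P \<in> D j \<Longrightarrow> \<not> good P \<Longrightarrow>
        (LINT x:P|M. g x) < \<alpha> * measure M P \<or> measure M P < \<alpha> * (LINT x:P|M. n x)"
  shows "\<exists>K. K \<subseteq> {(j, P). P \<in> D j} \<and> (\<forall>(j, P)\<in>K. P \<subseteq> Q) \<and>
     (\<forall>(j, P)\<in>K. \<forall>(j', P')\<in>K. (j, P) \<noteq> (j', P') \<longrightarrow> P \<inter> P' = {}) \<and>
     Q - \<Union>(snd ` K) \<in> sets M \<and>
     1 / (16 * c^2) * measure M Q < measure M (Q - \<Union>(snd ` K)) \<and>
     (\<forall>k' Q'. Q' \<in> D k' \<and> Q' \<subseteq> Q \<and>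
        tent \<delta> k' Q' \<inter> (tent \<delta> k Q - (\<Union>(j, P)\<in>K. tent \<delta> j P)) \<noteq> {} \<longrightarrow> good Q')"
proof -
  interpret square_dominated M g n by (rule sd)
  define B where "B = {(j, P). P \<in> D j \<and> P \<subseteq> Q \<and> \<not> good P}"
  define K where "K = maximal_cubes B"
  define S where "S = snd ` K"
  note dyD = dyadic_structureD[OF dy]
  have K_sub: "K \<subseteq> B" unfolding K_def by (rule maximal_cubes_subset)
  have B_cubes: "B \<subseteq> {(j, P). P \<in> D j}" unfolding B_def by auto
  have K_disj: "P \<inter> P' = {}" if "(j, P) \<in> K" "(j', P') \<in> K" "(j, P) \<noteq> (j', P')" for j P j' P'
    by (rule maximal_cubes_disjoint[OF dyD(7) B_cubes]) (use that in \<open>simp_all add: K_def\<close>)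
  have S_bad: "P \<in> sets M \<and> P \<subseteq> Q \<and> 0 < measure M P \<and>
      ((LINT x:P|M. g x) < \<alpha> * measure M P \<or> measure M P < \<alpha> * (LINT x:P|M. n x))"
    if P: "P \<in> S" for P
  proof -
    obtain j where "(j, P) \<in> K" using P unfolding S_def by force
    then have "P \<in> D j" "P \<subseteq> Q" "\<not> good P" using K_sub unfolding B_def by auto
    then show ?thesis using cubes[of P j] bad[of P j] by blast
  qed
  have S_disj: "disjoint S"
    unfolding pairwise_def disjnt_def
  proof (intro ballI impI)
    fix P P' assume "P \<in> S" "P' \<in> S" "P \<noteq> P'"
    then obtain j j' where "(j, P) \<in> K" "(j', P') \<in> K" unfolding S_def by force
    then show "P \<inter> P' = {}" using K_disj \<open>P \<noteq> P'\<close> by blast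
  qed
  have Q_fin: "Q \<in> sets M" "emeasure M Q < \<infinity>" using cubes[OF Q] by auto
  have "countable S"
    by (rule countable_disjoint_positive_measure[OF S_disj _ Q_fin]) (use S_bad in blast)
  then have measure_E: "measure M Q / (16 * c^2) < measure M (Q - \<Union>S)"
    by (rule measure_outside_bad_sets[OF Q_fin c energy large _ S_disj _ _ \<alpha>]) (use S_bad in blast)+
  have sets_E: "Q - \<Union>S \<in> sets M"
    using \<open>countable S\<close> S_bad Q_fin by (intro sets.Diff sets.countable_Union) auto
  have good: "good Q'"
    if Q': "Q' \<in> D k'" "Q' \<subseteq> Q" "tent \<delta> k' Q' \<inter> (tent \<delta> k Q - (\<Union>(j, P)\<in>K. tent \<delta> j P)) \<noteq> {}"
    for k' Q'
  proof (rule ccontr)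
    assume "\<not> good Q'"
    then have "(k', Q') \<in> B" unfolding B_def using Q' by auto
    then have "tent \<delta> k' Q' \<subseteq> (\<Union>(j, P)\<in>K. tent \<delta> j P)"
      unfolding K_def by (rule tent_subset_maximal_tents[OF dyD(1) less_imp_le[OF dyD(2)]])
    then show False using Q'(3) by blast
  qed
  show ?thesis
  proof (intro exI[of _ K] conjI allI impI)
    show "K \<subseteq> {(j, P). P \<in> D j}" "\<forall>(j, P)\<in>K. P \<subseteq> Q"
      using K_sub unfolding B_def by auto
    show "\<forall>(j, P)\<in>K. \<forall>(j', P')\<in>K. (j, P) \<noteq> (j', P') \<longrightarrow> P \<inter> P' = {}"
      using K_disj by blast
    show "Q - \<Union>(snd ` K) \<in> sets M" using sets_E unfolding S_def .
    show "1 / (16 * c^2) * measure M Q < measure M (Q - \<Union>(snd ` K))"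
      using measure_E unfolding S_def by simp
  qed (use good in blast)
qed

lemma stopping_time_vector:
  fixes M :: "'a::metric_space measure" and f :: "'a \<Rightarrow> complex^'n"
  assumes sets: "sets M = sets borel" and Eloc: "E_loc M cE \<kappa> lam"
    and dy: "dyadic_structure M \<delta> \<eta> a0 a1 D xc"
    and c: "0 < c" and \<alpha>: "0 < \<alpha>" "\<alpha> \<le> 1/8" "\<alpha> \<le> 1 / (64 * c^3)"
    and w: "norm w = 1" and Q: "Q \<in> D k"
    and f: "f \<in> borel_measurable M" "integrable M (\<lambda>x. (norm (f x))^2)"
    and energy: "sqrt (\<integral>x. (norm (f x))^2 \<partial>M) \<le> c * sqrt (measure M Q)"
    and close: "norm ((1 / measure M Q) *\<^sub>R (LINT x:Q|M. f x) - w) < 1/2"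
  shows "\<exists>K. K \<subseteq> {(j, P). P \<in> D j} \<and> (\<forall>(j, P)\<in>K. P \<subseteq> Q) \<and>
     (\<forall>(j, P)\<in>K. \<forall>(j', P')\<in>K. (j, P) \<noteq> (j', P') \<longrightarrow> P \<inter> P' = {}) \<and>
     Q - \<Union>(snd ` K) \<in> sets M \<and>
     1 / (16 * c^2) * measure M Q < measure M (Q - \<Union>(snd ` K)) \<and>
     (\<forall>k' Q'. Q' \<in> D k' \<and> Q' \<subseteq> Q \<and>
        tent \<delta> k' Q' \<inter> (tent \<delta> k Q - (\<Union>(j, P)\<in>K. tent \<delta> j P)) \<noteq> {} \<longrightarrow>
        \<alpha> \<le> Re (cinner w ((1 / measure M Q') *\<^sub>R (LINT x:Q'|M. f x))) \<and>
        (1 / measure M Q') * (LINT x:Q'|M. norm (f x)) \<le> 1 / \<alpha>)"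
proof -
  note cubes = dyadic_cube_measure[OF sets Eloc dy]
  have f_int: "set_integrable M P f" if "P \<in> D j" for P j
    using set_integrable_square_dominated[OF f(1,2) _, of P] cubes[OF that] by simp
  have energy': "(\<integral>x. (norm (f x))^2 \<partial>M) \<le> c^2 * measure M Q"
  proof -
    have "sqrt (\<integral>x. (norm (f x))^2 \<partial>M) \<le> sqrt (c^2 * measure M Q)"
      using energy c by (simp add: real_sqrt_mult)
    then show ?thesis by simp
  qed
  have large: "measure M Q / 2 < (LINT x:Q|M. Re (cinner w (f x)))"
    using cubes[OF Q] close by (intro average_close_imp_large[OF w _ f_int[OF Q]]) auto
  define good where "good P \<longleftrightarrow>
      \<alpha> \<le> Re (cinner w ((1 / measure M P) *\<^sub>R (LINT x:P|M. f x))) \<and>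
      (1 / measure M P) * (LINT x:P|M. norm (f x)) \<le> 1 / \<alpha>" for P
  have bad: "(LINT x:P|M. Re (cinner w (f x))) < \<alpha> * measure M P \<or>
      measure M P < \<alpha> * (LINT x:P|M. norm (f x))" if P: "P \<in> D j" and "\<not> good P" for P j
    by (rule average_conditions_fail[OF _ f_int[OF P] \<alpha>(1)])
      (use cubes[OF P] that(2) in \<open>auto simp: good_def\<close>)
  have "\<exists>K. K \<subseteq> {(j, P). P \<in> D j} \<and> (\<forall>(j, P)\<in>K. P \<subseteq> Q) \<and>
     (\<forall>(j, P)\<in>K. \<forall>(j', P')\<in>K. (j, P) \<noteq> (j', P') \<longrightarrow> P \<inter> P' = {}) \<and>
     Q - \<Union>(snd ` K) \<in> sets M \<and>
     1 / (16 * c^2) * measure M Q < measure M (Q - \<Union>(snd ` K)) \<and>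
     (\<forall>k' Q'. Q' \<in> D k' \<and> Q' \<subseteq> Q \<and>
        tent \<delta> k' Q' \<inter> (tent \<delta> k Q - (\<Union>(j, P)\<in>K. tent \<delta> j P)) \<noteq> {} \<longrightarrow> good Q')"
    by (rule stopping_time_cubes[OF square_dominated_Re_cinner[OF w f] dy cubes Q c energy' large \<alpha> bad])
  then show ?thesis unfolding good_def .
qed

text \<open>The theorem: with epsilon chosen so that c epsilon^(eta/2) = 1/2, the decomposition
  holds with alpha = min (1/8) (1/(64 c^3)) and beta = 1/(16 c^2) for every cube Q.\<close>
theorem mainTheorem17:
  fixes M :: "'a::metric_space measure"
    and \<delta> \<eta> a0 a1 cE \<kappa> lam C\<Theta> c :: real
    and D :: "nat \<Rightarrow> 'a set set" and xc :: "nat \<Rightarrow> 'a set \<Rightarrow> 'a"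
    and F :: "complex^'n \<Rightarrow> nat \<Rightarrow> 'a set \<Rightarrow> real \<Rightarrow> 'a \<Rightarrow> complex^'n"
  assumes space: "space M = UNIV" and sets: "sets M = sets borel"
    and Eloc: "E_loc M cE \<kappa> lam"
    and dy: "dyadic_structure M \<delta> \<eta> a0 a1 D xc"
    and CTheta: "C\<Theta> > 0" and c: "c > 0"
    and Fmeas: "\<forall>w k Q \<epsilon>. norm w = 1 \<and> Q \<in> D k \<and> \<epsilon> > 0 \<longrightarrow>
        F w k Q \<epsilon> \<in> borel_measurable M \<and> integrable M (\<lambda>x. (norm (F w k Q \<epsilon> x))^2)"
    and Fnorm: "\<forall>w k Q \<epsilon>. norm w = 1 \<and> Q \<in> D k \<and> \<epsilon> > 0 \<longrightarrow>
        sqrt (\<integral>x. (norm (F w k Q \<epsilon> x))^2 \<partial>M) \<le> c * sqrt (measure M Q)"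
    and Favg: "\<forall>w k Q \<epsilon>. norm w = 1 \<and> Q \<in> D k \<and> \<epsilon> > 0 \<longrightarrow>
        norm ((1 / measure M Q) *\<^sub>R (LINT x:Q|M. F w k Q \<epsilon> x) - w) < c * \<epsilon> powr (\<eta> / 2)"
  shows "let a = max 1 (a1 / \<delta>);
             t0 = (if lam = 0 then 1 else min 1 (C\<Theta> / (4 * a^3 * lam)));
             \<epsilon> = (1 / (2 * c)) powr (2 / \<eta>)
         in \<exists>\<alpha>>0. \<exists>\<beta>>0. \<forall>w::complex^'n. norm w = 1 \<longrightarrow>
              (\<forall>k Q. Q \<in> D k \<and> \<delta>^(Suc k) < t0 \<longrightarrow>
                (\<exists>K. K \<subseteq> {(j, P). P \<in> D j} \<and> (\<forall>(j, P)\<in>K. P \<subseteq> Q) \<and>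
                   (\<forall>(j, P)\<in>K. \<forall>(j', P')\<in>K. (j, P) \<noteq> (j', P') \<longrightarrow> P \<inter> P' = {}) \<and>
                   Q - \<Union>(snd ` K) \<in> sets M \<and>
                   measure M (Q - \<Union>(snd ` K)) > \<beta> * measure M Q \<and>
                   (\<forall>k' Q'. Q' \<in> D k' \<and> Q' \<subseteq> Q \<and>
                      tent \<delta> k' Q' \<inter> (tent \<delta> k Q - (\<Union>(j, P)\<in>K. tent \<delta> j P)) \<noteq> {} \<longrightarrow>
                      \<alpha> \<le> Re (cinner w ((1 / measure M Q') *\<^sub>R (LINT x:Q'|M. F w k Q \<epsilon> x))) \<and>
                      (1 / measure M Q') * (LINT x:Q'|M. norm (F w k Q \<epsilon> x)) \<le> 1 / \<alpha>)))"
proof -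
  define \<epsilon> where "\<epsilon> = (1 / (2 * c)) powr (2 / \<eta>)"
  define \<alpha> where "\<alpha> = min (1/8) (1 / (64 * c^3))"
  have \<epsilon>: "0 < \<epsilon>" unfolding \<epsilon>_def using c by simp
  have "c * \<epsilon> powr (\<eta> / 2) = c * (1 / (2 * c)) powr (2 / \<eta> * (\<eta> / 2))"
    unfolding \<epsilon>_def by (simp add: powr_powr)
  then have c\<epsilon>: "c * \<epsilon> powr (\<eta> / 2) = 1/2"
    using c dyadic_structureD(3)[OF dy] by simp
  have \<alpha>: "0 < \<alpha>" "\<alpha> \<le> 1/8" "\<alpha> \<le> 1 / (64 * c^3)" unfolding \<alpha>_def using c by auto
  have F: "F w k Q \<epsilon> \<in> borel_measurable M" "integrable M (\<lambda>x. (norm (F w k Q \<epsilon> x))^2)"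
      "sqrt (\<integral>x. (norm (F w k Q \<epsilon> x))^2 \<partial>M) \<le> c * sqrt (measure M Q)"
      "norm ((1 / measure M Q) *\<^sub>R (LINT x:Q|M. F w k Q \<epsilon> x) - w) < 1/2"
    if "norm w = 1" "Q \<in> D k" for w k Q
    using Fmeas[rule_format, OF conjI[OF that(1) conjI[OF that(2) \<epsilon>]]]
      Fnorm[rule_format, OF conjI[OF that(1) conjI[OF that(2) \<epsilon>]]]
      Favg[rule_format, OF conjI[OF that(1) conjI[OF that(2) \<epsilon>]]] unfolding c\<epsilon> by auto
  show ?thesis
    unfolding Let_def \<epsilon>_def[symmetric]
  proof (rule exI[of _ \<alpha>], intro conjI exI[of _ "1 / (16 * c^2)"] allI impI)
    show "0 < \<alpha>" by (rule \<alpha>(1))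
    show "0 < 1 / (16 * c^2)" using c by simp
  qed (rule stopping_time_vector[OF sets Eloc dy c \<alpha> _ _ F]; simp)
qed

end
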